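(* Let $r>1$ be a real number and let $p=T^3+rT^2+T+r$ over $\mathbb T$. Then a polynomial $q'$ over $\mathbb T$ satisfies $p\in(T+r)\boxdot q'$ if and only if $q'=T^2+sT+1$ for some $s\in[0,r^{-1}]$. In particular $T^2+T+1$ (whose coefficients are the elementary symmetric expressions $\max\{a_1,a_2\}$, $a_1a_2$ in the other roots $a_1=a_2=1$) is not such a quotient.
   Context: The tropical hyperfield $\mathbb T$ is $\mathbb R_{\ge0}$ with usual multiplication and hyperaddition $a\boxplus b=\{\max\{a,b\}\}$ if $a\ne b$, $a\boxplus a=[0,a]$ (so $c\in a\boxplus b$ iff the maximum of $a,b,c$ is attained at least twice). Polynomials over $\mathbb T$ are finitely supported sequences $\sum c_iT^i$; the hyperproduct is $p\boxdot q=\{\sum e_iT^i : e_i\in \boxplus_{k+l=i} c_kd_l\}$, with iterated sums $\boxplus_{i=1}^n a_i=\bigcup_{b\in\boxplus_{i=1}^{n-1}a_i} b\boxplus a_n$. *)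

theory Defs
  imports Complex_Main
begin

text \<open>Tropical hyperfield: elements are nonnegative reals.
  c \<in> a \<boxplus> b iff the maximum of a, b, c is attained at least twice.\<close>
definition thadd :: "real \<Rightarrow> real \<Rightarrow> real set" where
  "thadd a b = {c. c \<ge> 0 \<and>
     (let m = max a (max b c) in (a = m \<and> b = m) \<or> (a = m \<and> c = m) \<or> (b = m \<and> c = m))}"

text \<open>Iterated hypersum, left to right:
  hsum (xs @ [a]) = \<Union> b \<in> hsum xs. b \<boxplus> a, with empty sum {0}
  (so that a one-term sum is {a}).\<close>
fun thsum_rev :: "real list \<Rightarrow> real set" where
  "thsum_rev [] = {0}"
| "thsum_rev (a # xs) = (\<Union>b \<in> thsum_rev xs. thadd b a)"

definition thsum :: "real list \<Rightarrow> real set" where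
  "thsum xs = thsum_rev (rev xs)"

definition tpoly :: "(nat \<Rightarrow> real) \<Rightarrow> bool" where
  "tpoly f \<longleftrightarrow> (\<forall>i. f i \<ge> 0) \<and> finite {i. f i \<noteq> 0}"

definition tpmult :: "(nat \<Rightarrow> real) \<Rightarrow> (nat \<Rightarrow> real) \<Rightarrow> (nat \<Rightarrow> real) set" where
  "tpmult c d = {e. \<forall>i. e i \<in> thsum (map (\<lambda>k. c k * d (i - k)) [0..<Suc i])}"

text \<open>The polynomial with coefficient list [a0, a1, ...] (constant term first).\<close>
definition tcoeffs :: "real list \<Rightarrow> nat \<Rightarrow> real" where
  "tcoeffs xs i = (if i < length xs then xs ! i else 0)"

end

theory Submission
  imports Defs
begin

text \<open>The coefficient of \<open>T\<^sup>i\<close> in \<open>(T + r) \<boxdot> q\<close> ranges over \<open>r q\<^sub>i \<boxplus> q\<^sub>i\<^sub>-\<^sub>1\<close>.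
  Matching \<open>T\<^sup>3 + r T\<^sup>2 + T + r\<close> coefficientwise: the constant term gives \<open>q\<^sub>0 = 1\<close>; the
  linear term forces \<open>r q\<^sub>1 \<le> 1\<close>, hence \<open>q\<^sub>1 < r\<close>, and then the quadratic term can only be
  attained as \<open>r q\<^sub>2\<close>, so \<open>q\<^sub>2 = 1\<close>. From degree 4 on the product coefficient is 0,
  which forces \<open>r q\<^sub>i = q\<^sub>i\<^sub>-\<^sub>1\<close>; this recursion never returns to 0 once nonzero, so finite
  support makes \<open>q\<close> vanish from degree 3 on. Conversely every \<open>T\<^sup>2 + sT + 1\<close> with
  \<open>r s \<le> 1\<close> passes all these tests, while \<open>s = 1\<close> fails the linear one.\<close>

lemma mem_thadd_iff:
  assumes "a \<ge> 0" "b \<ge> 0"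
  shows "c \<in> thadd a b \<longleftrightarrow> 0 \<le> c \<and> (if a = b then c \<le> a else c = max a b)"
  using assms by (auto simp: thadd_def Let_def max_def)

lemma zero_mem_thadd_iff: "a \<ge> 0 \<Longrightarrow> b \<ge> 0 \<Longrightarrow> 0 \<in> thadd a b \<longleftrightarrow> a = b"
  by (auto simp: mem_thadd_iff max_def)

lemma thadd_0_left: "b \<ge> 0 \<Longrightarrow> thadd 0 b = {b}"
  by (auto simp: thadd_def Let_def max_def)

lemma thadd_0_right: "b \<ge> 0 \<Longrightarrow> thadd b 0 = {b}"
  by (auto simp: thadd_def Let_def max_def)

lemma thsum_rev_nonneg: "x \<in> thsum_rev xs \<Longrightarrow> x \<ge> 0"
  by (induction xs arbitrary: x) (auto simp: thadd_def)

lemma thsum_append_zeros: "thsum (xs @ replicate n 0) = thsum xs"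
proof -
  have "thsum_rev (replicate n 0 @ ys) = thsum_rev ys" for ys
  proof (induction n)
    case (Suc n)
    have "thsum_rev (replicate (Suc n) 0 @ ys) = (\<Union>b\<in>thsum_rev ys. thadd b 0)"
      using Suc by simp
    also have "\<dots> = thsum_rev ys"
      by (simp add: thadd_0_right[OF thsum_rev_nonneg] cong: SUP_cong)
    finally show ?case .
  qed simp
  then show ?thesis
    by (simp add: thsum_def)
qed

lemma thsum_singleton: "a \<ge> 0 \<Longrightarrow> thsum [a] = {a}"
  by (simp add: thsum_def thadd_0_left)

lemma thsum_pair: "a \<ge> 0 \<Longrightarrow> thsum [a, b] = thadd a b"
  by (simp add: thsum_def thadd_0_left)

lemma tpoly_tcoeffs:
  assumes "\<forall>x\<in>set xs. x \<ge> 0"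
  shows "tpoly (tcoeffs xs)"
proof -
  have "tcoeffs xs i \<ge> 0" for i
    using assms by (simp add: tcoeffs_def)
  moreover have "{i. tcoeffs xs i \<noteq> 0} \<subseteq> {..<length xs}"
    by (auto simp: tcoeffs_def split: if_splits)
  ultimately show ?thesis
    by (simp add: tpoly_def finite_subset)
qed

lemma eq_tcoeffs_map_upt: "\<forall>i\<ge>n. f i = 0 \<Longrightarrow> f = tcoeffs (map f [0..<n])"
  by (auto simp: tcoeffs_def)

lemma tpmult_linear_iff:
  assumes "a \<ge> 0" "\<forall>i. q i \<ge> 0"
  shows "e \<in> tpmult (tcoeffs [a, b]) q \<longleftrightarrow>
           e 0 = a * q 0 \<and> (\<forall>i\<ge>1. e i \<in> thadd (a * q i) (b * q (i - 1)))"
proof -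
  have coeff: "thsum (map (\<lambda>k. tcoeffs [a, b] k * q (i - k)) [0..<Suc i])
      = (if i = 0 then {a * q 0} else thadd (a * q i) (b * q (i - 1)))" for i
  proof (cases i)
    case (Suc j)
    have upt_split: "[0..<Suc (Suc j)] = [0, 1] @ [2..<Suc (Suc j)]"
      by (simp add: upt_conv_Cons numeral_2_eq_2 del: upt_Suc)
    have "map (\<lambda>k. tcoeffs [a, b] k * q (Suc j - k)) [2..<Suc (Suc j)] = map (\<lambda>_. 0) [2..<Suc (Suc j)]"
      by (rule map_cong) (auto simp: tcoeffs_def)
    then have "map (\<lambda>k. tcoeffs [a, b] k * q (Suc j - k)) [0..<Suc (Suc j)]
        = [a * q (Suc j), b * q j] @ replicate j 0"
      unfolding upt_split map_append by (simp add: map_replicate_const tcoeffs_def del: upt_Suc)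
    then have "thsum (map (\<lambda>k. tcoeffs [a, b] k * q (Suc j - k)) [0..<Suc (Suc j)])
        = thsum [a * q (Suc j), b * q j]"
      by (simp only: thsum_append_zeros)
    then show ?thesis
      using Suc assms by (simp add: thsum_pair del: upt_Suc)
  qed (use assms in \<open>simp add: thsum_singleton tcoeffs_def\<close>)
  have "e \<in> tpmult (tcoeffs [a, b]) q \<longleftrightarrow>
      (\<forall>i. e i \<in> (if i = 0 then {a * q 0} else thadd (a * q i) (b * q (i - 1))))"
    unfolding tpmult_def coeff by simp
  also have "\<dots> \<longleftrightarrow> e 0 = a * q 0 \<and> (\<forall>i\<ge>1. e i \<in> thadd (a * q i) (b * q (i - 1)))"
  proof (intro iffI conjI allI impI)
    fix i :: nat
    assume all: "\<forall>i. e i \<in> (if i = 0 then {a * q 0} else thadd (a * q i) (b * q (i - 1)))"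
    show "e 0 = a * q 0"
      using all[rule_format, of 0] by simp
    assume "1 \<le> i"
    then show "e i \<in> thadd (a * q i) (b * q (i - 1))"
      using all[rule_format, of i] by simp
  next
    fix i :: nat
    assume "e 0 = a * q 0 \<and> (\<forall>i\<ge>1. e i \<in> thadd (a * q i) (b * q (i - 1)))"
    then show "e i \<in> (if i = 0 then {a * q 0} else thadd (a * q i) (b * q (i - 1)))"
      by (cases i) auto
  qed
  finally show ?thesis .
qed

lemma vanishes_of_finite_support:
  assumes fin: "finite {i. f i \<noteq> 0}"
    and nonzero_Suc: "\<forall>i\<ge>n. f i \<noteq> 0 \<longrightarrow> f (Suc i) \<noteq> 0"
    and "n \<le> m"
  shows "f m = 0"
proof (rule ccontr)
  assume "f m \<noteq> 0"
  then have "f (m + k) \<noteq> 0" for k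
    using nonzero_Suc \<open>n \<le> m\<close> by (induction k) auto
  then have "{m..} \<subseteq> {i. f i \<noteq> 0}"
    by (auto dest: le_Suc_ex)
  then show False
    using finite_subset[OF _ fin] infinite_Ici[of m] by blast
qed

lemma quotient_is_tcoeffs:
  fixes r :: real
  assumes "r > 1" "tpoly q"
    and quot: "tcoeffs [r, 1, r, 1] \<in> tpmult (tcoeffs [r, 1]) q"
  shows "\<exists>s. 0 \<le> s \<and> s \<le> inverse r \<and> q = tcoeffs [1, s, 1]"
proof -
  have nonneg: "\<forall>i. q i \<ge> 0" and fin: "finite {i. q i \<noteq> 0}"
    using \<open>tpoly q\<close> by (auto simp: tpoly_def)
  have coeff0: "r = r * q 0"
    and coeff: "\<And>i. i \<ge> 1 \<Longrightarrow> tcoeffs [r, 1, r, 1] i \<in> thadd (r * q i) (q (i - 1))"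
    using quot tpmult_linear_iff[of r q] \<open>r > 1\<close> nonneg by (auto simp: tcoeffs_def)
  have nonneg': "r * q i \<ge> 0" for i
    using nonneg \<open>r > 1\<close> by simp
  have q0: "q 0 = 1"
    using coeff0 \<open>r > 1\<close> by simp
  have rq1: "r * q 1 \<le> 1"
    using coeff[of 1] q0 nonneg' by (auto simp: tcoeffs_def mem_thadd_iff split: if_splits)
  have "q 1 \<le> r * q 1"
    using mult_right_mono[of 1 r "q 1"] nonneg \<open>r > 1\<close> by simp
  then have "q 1 < r"
    using rq1 \<open>r > 1\<close> by linarith
  then have q2: "q 2 = 1"
    using coeff[of 2] nonneg nonneg' \<open>r > 1\<close>
    by (auto simp: tcoeffs_def mem_thadd_iff max_def split: if_splits)
  have "r * q (Suc i) = q i" if "i \<ge> 3" for i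
    using coeff[of "Suc i"] that nonneg nonneg' by (simp add: tcoeffs_def zero_mem_thadd_iff)
  then have "\<forall>i\<ge>3. q i \<noteq> 0 \<longrightarrow> q (Suc i) \<noteq> 0"
    by (metis mult_zero_right)
  then have "\<forall>i\<ge>3. q i = 0"
    using vanishes_of_finite_support[OF fin] by blast
  then have "q = tcoeffs [1, q 1, 1]"
    using eq_tcoeffs_map_upt[of 3 q] q0 q2 by (simp add: numeral_3_eq_3 numeral_2_eq_2)
  moreover have "q 1 \<le> inverse r"
    using rq1 \<open>r > 1\<close> by (simp add: field_simps)
  ultimately show ?thesis
    using nonneg by blast
qed

lemma tcoeffs_is_quotient:
  fixes r :: real
  assumes "r > 1" "0 \<le> s" "s \<le> inverse r"
  shows "tcoeffs [r, 1, r, 1] \<in> tpmult (tcoeffs [r, 1]) (tcoeffs [1, s, 1])"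
proof -
  have "r * s \<le> 1"
    using assms by (simp add: field_simps)
  moreover have "s \<le> r * s"
    using mult_right_mono[of 1 r s] assms by simp
  ultimately have "s < r"
    using \<open>r > 1\<close> by linarith
  have "tcoeffs [r, 1, r, 1] i \<in> thadd (r * tcoeffs [1, s, 1] i) (tcoeffs [1, s, 1] (i - 1))"
    if "i \<ge> 1" for i
  proof -
    consider "i = 1" | "i = 2" | "i = 3" | "i \<ge> 4"
      using \<open>i \<ge> 1\<close> by linarith
    then show ?thesis
      using \<open>r * s \<le> 1\<close> \<open>s < r\<close> assms
      by cases (simp_all add: tcoeffs_def mem_thadd_iff max_def)
  qed
  moreover have "\<forall>i. tcoeffs [1, s, 1] i \<ge> 0"
    using assms by (simp add: tcoeffs_def nth_Cons split: nat.split)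
  ultimately show ?thesis
    using assms by (simp add: tpmult_linear_iff tcoeffs_def)
qed

theorem mainTheorem7:
  fixes r :: real
  assumes "r > 1"
  shows "(\<forall>q. tpoly q \<longrightarrow>
            (tcoeffs [r, 1, r, 1] \<in> tpmult (tcoeffs [r, 1]) q
             \<longleftrightarrow> (\<exists>s. 0 \<le> s \<and> s \<le> inverse r \<and> q = tcoeffs [1, s, 1])))
         \<and> tcoeffs [r, 1, r, 1] \<notin> tpmult (tcoeffs [r, 1]) (tcoeffs [1, 1, 1])"
proof (intro conjI allI impI iffI notI)
  fix q
  assume "tpoly q" "tcoeffs [r, 1, r, 1] \<in> tpmult (tcoeffs [r, 1]) q"
  then show "\<exists>s. 0 \<le> s \<and> s \<le> inverse r \<and> q = tcoeffs [1, s, 1]"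
    using quotient_is_tcoeffs \<open>r > 1\<close> by blast
next
  fix q
  assume "\<exists>s. 0 \<le> s \<and> s \<le> inverse r \<and> q = tcoeffs [1, s, 1]"
  then show "tcoeffs [r, 1, r, 1] \<in> tpmult (tcoeffs [r, 1]) q"
    using tcoeffs_is_quotient \<open>r > 1\<close> by blast
next
  assume "tcoeffs [r, 1, r, 1] \<in> tpmult (tcoeffs [r, 1]) (tcoeffs [1, 1, 1])"
  then obtain s where "s \<le> inverse r" and same: "tcoeffs [1, 1, 1] = tcoeffs [1, s, 1]"
    using quotient_is_tcoeffs[OF \<open>r > 1\<close> tpoly_tcoeffs[of "[1, 1, 1]"]] by auto
  moreover have "s = 1"
    using fun_cong[OF same, of 1] by (simp add: tcoeffs_def)
  moreover have "inverse r < 1"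
    using \<open>r > 1\<close> by (simp add: inverse_less_1_iff)
  ultimately show False
    by simp
qed

end
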